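(* For all integers $M,N,p\ge1$, $$\delta_p(M,N)=\frac{1}{(MN)^p}\sum_{\substack{\pi,\sigma\in P(p)\\ \pi\triangleright\sigma}}\frac{M!}{(M-|\pi|)!}\cdot\frac{N!}{(N-|\sigma|)!},$$ where $\frac{M!}{(M-s)!}$ is interpreted as $0$ when $s>M$ (and similarly for $N$).
   Context: $P(p)$ is the set of partitions of $\{1,\dots,p\}$, and $|\pi|$ is the number of blocks of $\pi$. For $\pi,\sigma\in P(p)$, write $\pi\triangleright\sigma$ if for every block $\beta$ of $\pi$ and every block $\gamma$ of $\sigma$, $\#\{x\in\{1,\dots,p\}:x\in\beta,\ x\in\gamma\}=\#\{x\in\{1,\dots,p\}:x\in\beta,\ x+1\in\gamma\}$, indices taken modulo $p$ (so $p+1=1$). For integers $M,N,p\ge1$, $\delta_p(M,N)=\frac{1}{(MN)^p}\#\{(a,b)\in\mathbb Z_M^p\times\mathbb Z_N^p:\{(a_y,b_y)\}_{y=1}^p=\{(a_y,b_{y+1})\}_{y=1}^p\text{ as multisets}\}$, with $b_{p+1}=b_1$. *)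

theory Defs
  imports Complex_Main "HOL-Library.Disjoint_Sets" "HOL-Library.Multiset" "HOL-Library.FuncSet"
begin

definition set_partitions :: "nat \<Rightarrow> nat set set set" where
  "set_partitions p = {P. partition_on {1..p} P}"

definition cyc_succ :: "nat \<Rightarrow> nat \<Rightarrow> nat" where
  "cyc_succ p x = (if x = p then 1 else x + 1)"

definition rel_tri :: "nat \<Rightarrow> nat set set \<Rightarrow> nat set set \<Rightarrow> bool" where
  "rel_tri p \<pi> \<sigma> \<longleftrightarrow> (\<forall>\<beta>\<in>\<pi>. \<forall>\<gamma>\<in>\<sigma>.
     card {x\<in>{1..p}. x \<in> \<beta> \<and> x \<in> \<gamma>} = card {x\<in>{1..p}. x \<in> \<beta> \<and> cyc_succ p x \<in> \<gamma>})"

text \<open>Pairs (a,b) in Z_M^p x Z_N^p, coordinates indexed by {1..p}, Z_M represented by {0..<M}.\<close>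
definition delta :: "nat \<Rightarrow> nat \<Rightarrow> nat \<Rightarrow> real" where
  "delta p M N = real (card {(a, b). a \<in> ({1..p} \<rightarrow>\<^sub>E {..<M}) \<and> b \<in> ({1..p} \<rightarrow>\<^sub>E {..<N}) \<and>
      image_mset (\<lambda>y. (a y, b y)) (mset_set {1..p}) =
      image_mset (\<lambda>y. (a y, b (cyc_succ p y))) (mset_set {1..p})})
    / (real (M * N)) ^ p"

definition falling :: "nat \<Rightarrow> nat \<Rightarrow> real" where
  "falling M s = (if s \<le> M then fact M / fact (M - s) else 0)"

end

theory Submission
  imports Defs
begin

text \<open>Group the pairs (a, b) by their kernel partitions (\<pi>, \<sigma>), where the kernel of a map
  is the partition of {1..p} into its nonempty fibers. For maps a, b with kernels \<pi>, \<sigma>, the multiplicity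
  of a value pair (a x, b x) in the left multiset is the size of an intersection of a block of \<pi> with
  a block of \<sigma>, and in the right multiset the size of the corresponding shifted intersection; so the
  multiset condition says exactly \<pi> \<triangleright> \<sigma>. Maps into Z_M with kernel \<pi> correspond to
  injections of the blocks of \<pi> into Z_M, of which there are M!/(M - |\<pi>|)!.\<close>

text \<open>Meaningful only for x in the partitioned set; otherwise an arbitrary set.\<close>
definition block_of :: "'a set set \<Rightarrow> 'a \<Rightarrow> 'a set" where
  "block_of P x = (THE \<beta>. \<beta> \<in> P \<and> x \<in> \<beta>)"

context
  fixes A :: "'a set" and P :: "'a set set"
  assumes P: "partition_on A P"
begin

lemma ex1_block: "x \<in> A \<Longrightarrow> \<exists>!\<beta>. \<beta> \<in> P \<and> x \<in> \<beta>"
  using P by (auto simp: partition_on_def disjoint_def)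

lemma block_of_mem: "x \<in> A \<Longrightarrow> block_of P x \<in> P"
  and mem_block_of: "x \<in> A \<Longrightarrow> x \<in> block_of P x"
  unfolding block_of_def using theI'[OF ex1_block] by blast+

lemma block_of_eqI: "\<beta> \<in> P \<Longrightarrow> x \<in> \<beta> \<Longrightarrow> block_of P x = \<beta>"
  unfolding block_of_def using P by (intro the1_equality ex1_block) (auto simp: partition_on_def)

lemma block_subset: "\<beta> \<in> P \<Longrightarrow> \<beta> \<subseteq> A"
  using partition_onD1[OF P] by blast

lemma block_nonempty: "\<beta> \<in> P \<Longrightarrow> \<exists>x. x \<in> \<beta>"
  using partition_onD3[OF P] by (metis all_not_in_conv)

lemma block_of_image: "block_of P ` A = P"
proof
  show "block_of P ` A \<subseteq> P"
    using block_of_mem by blast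
  show "P \<subseteq> block_of P ` A"
  proof
    fix \<beta> assume "\<beta> \<in> P"
    then obtain x where "x \<in> \<beta>"
      using block_nonempty by blast
    with \<open>\<beta> \<in> P\<close> show "\<beta> \<in> block_of P ` A"
      using block_subset block_of_eqI by blast
  qed
qed

lemma block_of_eq_iff: "x \<in> A \<Longrightarrow> y \<in> A \<Longrightarrow> block_of P y = block_of P x \<longleftrightarrow> y \<in> block_of P x"
  using block_of_eqI[OF block_of_mem] mem_block_of by metis

end

definition fiber_partition :: "'a set \<Rightarrow> ('a \<Rightarrow> 'b) \<Rightarrow> 'a set set" where
  "fiber_partition A a = (\<lambda>x. {y \<in> A. a y = a x}) ` A"

lemma partition_on_fiber_partition: "partition_on A (fiber_partition A a)"
  by (auto simp: fiber_partition_def partition_on_def disjoint_def)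

lemma fiber_partition_eq_iff:
  assumes P: "partition_on A P"
  shows "fiber_partition A a = P \<longleftrightarrow> (\<forall>x\<in>A. {y \<in> A. a y = a x} = block_of P x)"
proof
  assume fib: "fiber_partition A a = P"
  show "\<forall>x\<in>A. {y \<in> A. a y = a x} = block_of P x"
  proof
    fix x assume "x \<in> A"
    then have "{y \<in> A. a y = a x} \<in> P" using fib by (auto simp: fiber_partition_def)
    with \<open>x \<in> A\<close> show "{y \<in> A. a y = a x} = block_of P x"
      by (simp add: block_of_eqI[OF P])
  qed
next
  assume "\<forall>x\<in>A. {y \<in> A. a y = a x} = block_of P x"
  then have "(\<lambda>x. {y \<in> A. a y = a x}) ` A = block_of P ` A"
    by (intro image_cong) simp_all
  then show "fiber_partition A a = P"
    by (simp add: fiber_partition_def block_of_image[OF P])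
qed

lemma image_block_of_fiber:
  assumes P: "partition_on A P" and fib: "fiber_partition A a = P" and "x \<in> A"
  shows "a ` block_of P x = {a x}"
proof -
  have "block_of P x = {y \<in> A. a y = a x}"
    using fib \<open>x \<in> A\<close> by (simp add: fiber_partition_eq_iff[OF P])
  then show ?thesis
    using \<open>x \<in> A\<close> by auto
qed

lemma card_fiber_partition_eq:
  assumes P: "partition_on A P"
  shows "card {a \<in> A \<rightarrow>\<^sub>E B. fiber_partition A a = P} = card {f \<in> P \<rightarrow>\<^sub>E B. inj_on f P}"
proof -
  define lift where "lift f = (\<lambda>x\<in>A. f (block_of P x))" for f :: "'a set \<Rightarrow> 'b"
  define descend where "descend a = (\<lambda>\<beta>\<in>P. the_elem (a ` \<beta>))" for a :: "'a \<Rightarrow> 'b"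
  have descend_block: "descend a (block_of P x) = a x"
    if "fiber_partition A a = P" "x \<in> A" for a x
    using block_of_mem[OF P that(2)] by (simp add: descend_def image_block_of_fiber[OF P that])
  have fiber_lift: "fiber_partition A (lift f) = P" if "inj_on f P" for f
  proof -
    have "{y \<in> A. lift f y = lift f x} = block_of P x" if "x \<in> A" for x
    proof -
      have "{y \<in> A. lift f y = lift f x} = {y \<in> A. block_of P y = block_of P x}"
        using \<open>inj_on f P\<close> \<open>x \<in> A\<close> block_of_mem[OF P] by (auto simp: lift_def inj_on_eq_iff)
      also have "\<dots> = block_of P x"
        using \<open>x \<in> A\<close> block_of_eq_iff[OF P] block_subset[OF P] block_of_mem[OF P] by blast
      finally show ?thesis .
    qed
    then show ?thesis by (simp add: fiber_partition_eq_iff[OF P])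
  qed
  show ?thesis
  proof (rule sym, rule bij_betw_same_card, rule bij_betwI[where g = descend])
    show lift_in: "lift \<in> {f \<in> P \<rightarrow>\<^sub>E B. inj_on f P} \<rightarrow> {a \<in> A \<rightarrow>\<^sub>E B. fiber_partition A a = P}"
      using fiber_lift block_of_mem[OF P] by (auto simp: lift_def)
    show descend_in: "descend \<in> {a \<in> A \<rightarrow>\<^sub>E B. fiber_partition A a = P} \<rightarrow> {f \<in> P \<rightarrow>\<^sub>E B. inj_on f P}"
    proof
      fix a assume "a \<in> {a \<in> A \<rightarrow>\<^sub>E B. fiber_partition A a = P}"
      then have a: "a \<in> A \<rightarrow>\<^sub>E B" and fib: "fiber_partition A a = P" by auto
      have "descend a \<in> P \<rightarrow>\<^sub>E B"
      proof (rule PiE_I)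
        fix \<beta> assume "\<beta> \<in> P"
        then obtain x where "x \<in> A" "\<beta> = block_of P x"
          using block_of_image[OF P] by blast
        then show "descend a \<beta> \<in> B"
          using a descend_block[OF fib] by auto
      qed (simp add: descend_def)
      moreover have "inj_on (descend a) P"
      proof (rule inj_onI)
        fix \<beta> \<gamma> assume "\<beta> \<in> P" "\<gamma> \<in> P" and eq: "descend a \<beta> = descend a \<gamma>"
        obtain x where x: "x \<in> A" "\<beta> = block_of P x"
          using \<open>\<beta> \<in> P\<close> block_of_image[OF P] by blast
        obtain y where y: "y \<in> A" "\<gamma> = block_of P y"
          using \<open>\<gamma> \<in> P\<close> block_of_image[OF P] by blast
        have "a y = a x"
          using eq descend_block[OF fib] x y by simp
        moreover have "{z \<in> A. a z = a x} = block_of P x"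
          using fib fiber_partition_eq_iff[OF P] x(1) by blast
        ultimately have "y \<in> block_of P x"
          using y(1) by blast
        then show "\<beta> = \<gamma>"
          using x y block_of_eq_iff[OF P x(1) y(1)] by metis
      qed
      ultimately show "descend a \<in> {f \<in> P \<rightarrow>\<^sub>E B. inj_on f P}" by simp
    qed
    show "descend (lift f) = f" if f: "f \<in> {f \<in> P \<rightarrow>\<^sub>E B. inj_on f P}" for f
    proof (rule PiE_ext)
      show "descend (lift f) \<in> P \<rightarrow>\<^sub>E B" "f \<in> P \<rightarrow>\<^sub>E B"
        using funcset_mem[OF descend_in funcset_mem[OF lift_in f]] f by auto
      fix \<beta> assume "\<beta> \<in> P"
      then obtain x where x: "x \<in> A" "\<beta> = block_of P x"
        using block_of_image[OF P] by blast
      have "descend (lift f) (block_of P x) = lift f x"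
        using descend_block[OF fiber_lift x(1)] f by simp
      then show "descend (lift f) \<beta> = f \<beta>"
        using x by (simp add: lift_def)
    qed
    show "lift (descend a) = a" if a: "a \<in> {a \<in> A \<rightarrow>\<^sub>E B. fiber_partition A a = P}" for a
    proof (rule PiE_ext)
      show "lift (descend a) \<in> A \<rightarrow>\<^sub>E B" "a \<in> A \<rightarrow>\<^sub>E B"
        using funcset_mem[OF lift_in funcset_mem[OF descend_in a]] a by auto
      show "lift (descend a) x = a x" if "x \<in> A" for x
        using that descend_block[OF _ that] a by (simp add: lift_def)
    qed
  qed
qed

lemma falling_eq_prod: "falling M s = real (\<Prod>i = 0..<s. M - i)"
proof (induction s)
  case 0
  then show ?case by (simp add: falling_def)
next
  case (Suc s)
  show ?case
  proof (cases "Suc s \<le> M")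
    case True
    have "M - s = Suc (M - Suc s)"
      using True by simp
    then have "(fact (M - s) :: real) = real (M - s) * fact (M - Suc s)"
      by simp
    then have "fact M / fact (M - s) * real (M - s) = (fact M / fact (M - Suc s) :: real)"
      using True by simp
    with Suc True show ?thesis by (simp add: falling_def)
  next
    case False
    then have "M \<in> {0..<Suc s}" by simp
    then have "(\<Prod>i = 0..<Suc s. M - i) = 0"
      by (intro prod_zero) auto
    with False show ?thesis by (simp add: falling_def)
  qed
qed

lemma card_fiber_partition_eq_falling:
  assumes "finite A" "partition_on A P"
  shows "real (card {a \<in> A \<rightarrow>\<^sub>E {..<M}. fiber_partition A a = P}) = falling M (card P)"
proof -
  have "card {a \<in> A \<rightarrow>\<^sub>E {..<M}. fiber_partition A a = P} = (\<Prod>i = 0..<card P. M - i)"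
    using card_fiber_partition_eq[OF assms(2), of "{..<M}"]
      card_inj_on_subset_funcset[of P "{..<M}" P] finite_elements[OF assms] by simp
  then show ?thesis
    by (simp add: falling_eq_prod)
qed

lemma count_image_mset_set: "finite A \<Longrightarrow> count (image_mset h (mset_set A)) z = card {y \<in> A. h y = z}"
  by (simp add: count_image_mset Collect_conj_eq Int_commute vimage_def)

lemma image_mset_pairs_shift_eq_iff:
  fixes a :: "'a \<Rightarrow> 'b" and b :: "'a \<Rightarrow> 'c"
  assumes "finite A" and s: "s ` A \<subseteq> A"
  shows "image_mset (\<lambda>y. (a y, b y)) (mset_set A) = image_mset (\<lambda>y. (a y, b (s y))) (mset_set A) \<longleftrightarrow>
    (\<forall>\<beta>\<in>fiber_partition A a. \<forall>\<gamma>\<in>fiber_partition A b.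
       card {x \<in> A. x \<in> \<beta> \<and> x \<in> \<gamma>} = card {x \<in> A. x \<in> \<beta> \<and> s x \<in> \<gamma>})"
proof -
  define Q where "Q u v \<longleftrightarrow> card {y \<in> A. a y = u \<and> b y = v} = card {y \<in> A. a y = u \<and> b (s y) = v}"
    for u v
  have "image_mset (\<lambda>y. (a y, b y)) (mset_set A) = image_mset (\<lambda>y. (a y, b (s y))) (mset_set A)
      \<longleftrightarrow> (\<forall>u v. Q u v)"
    by (simp add: multiset_eq_iff count_image_mset_set[OF \<open>finite A\<close>] Q_def)
  also have "\<dots> \<longleftrightarrow> (\<forall>u\<in>a ` A. \<forall>v\<in>b ` A. Q u v)"
  proof -
    have "Q u v" if "u \<notin> a ` A \<or> v \<notin> b ` A" for u v
    proof -
      have "{y \<in> A. a y = u \<and> b y = v} = {}" "{y \<in> A. a y = u \<and> b (s y) = v} = {}"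
        using that s by auto
      then show ?thesis unfolding Q_def by (simp only:)
    qed
    then show ?thesis by blast
  qed
  also have "\<dots> \<longleftrightarrow> (\<forall>z\<in>A. \<forall>w\<in>A. Q (a z) (b w))"
    by simp
  also have "\<dots> \<longleftrightarrow> (\<forall>\<beta>\<in>fiber_partition A a. \<forall>\<gamma>\<in>fiber_partition A b.
       card {x \<in> A. x \<in> \<beta> \<and> x \<in> \<gamma>} = card {x \<in> A. x \<in> \<beta> \<and> s x \<in> \<gamma>})"
  proof -
    have "{x \<in> A. x \<in> {y \<in> A. a y = a z} \<and> x \<in> {y \<in> A. b y = b w}} = {y \<in> A. a y = a z \<and> b y = b w}"
      "{x \<in> A. x \<in> {y \<in> A. a y = a z} \<and> s x \<in> {y \<in> A. b y = b w}} = {y \<in> A. a y = a z \<and> b (s y) = b w}"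
      for z w using s by auto
    then show ?thesis
      by (simp add: fiber_partition_def Q_def)
  qed
  finally show ?thesis .
qed

lemma card_product_filter_eq_sum_fibers:
  assumes "finite X" "finite Y" "finite U" "finite V" "f ` X \<subseteq> U" "g ` Y \<subseteq> V"
  shows "card {(x, y). x \<in> X \<and> y \<in> Y \<and> R (f x) (g y)} =
    (\<Sum>(u, v) \<in> {(u, v). u \<in> U \<and> v \<in> V \<and> R u v}. card {x \<in> X. f x = u} * card {y \<in> Y. g y = v})"
proof -
  let ?S = "{(x, y). x \<in> X \<and> y \<in> Y \<and> R (f x) (g y)}"
  let ?T = "{(u, v). u \<in> U \<and> v \<in> V \<and> R u v}"
  let ?h = "\<lambda>(x, y). (f x, g y)"
  have fin: "finite ?S" "finite ?T"
    using assms by (auto intro: finite_subset[of _ "X \<times> Y"] finite_subset[of _ "U \<times> V"])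
  have "card ?S = (\<Sum>z \<in> ?S. 1)"
    by simp
  also have "\<dots> = (\<Sum>t \<in> ?T. \<Sum>z \<in> {z \<in> ?S. ?h z = t}. 1)"
    using assms by (intro sum.group[symmetric] fin) auto
  also have "\<dots> = (\<Sum>(u, v) \<in> ?T. card ({x \<in> X. f x = u} \<times> {y \<in> Y. g y = v}))"
  proof (rule sum.cong[OF refl], clarify)
    fix u v assume "R u v"
    then have "{z \<in> ?S. ?h z = (u, v)} = {x \<in> X. f x = u} \<times> {y \<in> Y. g y = v}"
      by auto
    then show "(\<Sum>z \<in> {z \<in> ?S. ?h z = (u, v)}. 1) = card ({x \<in> X. f x = u} \<times> {y \<in> Y. g y = v})"
      by simp
  qed
  finally show ?thesis
    by (simp add: card_cartesian_product)
qed

theorem proposition7p1: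
  fixes M N p :: nat
  assumes "M \<ge> 1" and "N \<ge> 1" and "p \<ge> 1"
  shows "delta p M N = 1 / (real (M * N)) ^ p *
    (\<Sum>(\<pi>, \<sigma>) \<in> {(\<pi>, \<sigma>). \<pi> \<in> set_partitions p \<and> \<sigma> \<in> set_partitions p \<and> rel_tri p \<pi> \<sigma>}.
       falling M (card \<pi>) * falling N (card \<sigma>))"
proof -
  let ?A = "{1..p}"
  let ?T = "{(\<pi>, \<sigma>). \<pi> \<in> set_partitions p \<and> \<sigma> \<in> set_partitions p \<and> rel_tri p \<pi> \<sigma>}"
  have "cyc_succ p ` ?A \<subseteq> ?A"
    by (auto simp: cyc_succ_def)
  then have "delta p M N = card {(a, b). a \<in> ?A \<rightarrow>\<^sub>E {..<M} \<and> b \<in> ?A \<rightarrow>\<^sub>E {..<N} \<and>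
      rel_tri p (fiber_partition ?A a) (fiber_partition ?A b)} / (real (M * N)) ^ p"
    by (simp add: delta_def image_mset_pairs_shift_eq_iff rel_tri_def)
  also have "card {(a, b). a \<in> ?A \<rightarrow>\<^sub>E {..<M} \<and> b \<in> ?A \<rightarrow>\<^sub>E {..<N} \<and>
      rel_tri p (fiber_partition ?A a) (fiber_partition ?A b)} =
    (\<Sum>(\<pi>, \<sigma>) \<in> ?T. card {a \<in> ?A \<rightarrow>\<^sub>E {..<M}. fiber_partition ?A a = \<pi>} *
                    card {b \<in> ?A \<rightarrow>\<^sub>E {..<N}. fiber_partition ?A b = \<sigma>})"
    by (rule card_product_filter_eq_sum_fibers)
      (auto simp: set_partitions_def finite_PiE finitely_many_partition_on partition_on_fiber_partition)
  also have "real \<dots> = (\<Sum>(\<pi>, \<sigma>) \<in> ?T. falling M (card \<pi>) * falling N (card \<sigma>))"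
    by (auto simp: set_partitions_def card_fiber_partition_eq_falling intro!: sum.cong)
  finally show ?thesis
    by simp
qed

end
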